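(* Consider a combinatorial auction as described in the context, let $x^*$ be an efficient allocation, and let $\bar\rho=(\bar\rho_i)_{i\in\mathcal I}$ be any payment vector that is core-selecting at $x^*$. Then there exists an Artificial Walrasian Equilibrium (obtained by adding valid cuts as artificial items) supporting $x^*$ in which every winning bidder $i$ pays in total exactly $\bar\rho_i$, i.e. $p\,a^{i*}=\bar\rho_i$ where $p$ is the price vector on original and artificial items and $a^{i*}$ is bidder $i$'s allocated bundle in the augmented auction.
   Context: Combinatorial auction (CA): item types $j\in\mathcal J=\{1,\dots,J\}$ with supply $c_j\in\mathbb Z_{\ge1}$ (supply vector $c$); bidders $\mathcal I=\{1,\dots,I\}$; a finite set of bids $\mathcal K=\{1,\dots,K\}$, each bid $k$ made by a bidder $i(k)$ and consisting of a bundle $a^k\in\mathbb Z^J_{\ge0}$ with $a^k\le c$ and an amount $b_k\ge0$; $\mathcal K_i$ is the set of bids of bidder $i$. Bids are taken to be truthful. $\bm A$ is the $J\times K$ matrix with columns $a^k$, and $\bm B$ is the $I\times K$ matrix with $\bm B_{i,k}=1$ iff $k\in\mathcal K_i$, else $0$. A feasible allocation is $x\in\{0,1\}^K$ with $\bm Ax\le c$ and $\bm Bx\le\bm 1$ (at most one bid accepted per bidder). For a set of bidders $\mathcal C$, a supply vector $c'$ and bid amounts, $w(\mathcal C,c',\cdot)$ is the maximum of $\sum_k b_kx_k$ over feasible allocations (with supply $c'$) using only bids of bidders in $\mathcal C$. An efficient allocation $x^*$ is an optimal feasible allocation for all bidders and supply $c$; $a^{i*}$ and $b_{i*}$ denote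 the bundle and amount of bidder $i$'s accepted bid ($\bm 0$ and $0$ if none). A payment vector $\rho$ (with $\rho_i=0$ for bidders with no accepted bid) is core-selecting at $x^*$ if $\rho_i\le b_{i*}$ for all $i$ and for every $\mathcal C\subseteq\mathcal I$: $\sum_{i\in\mathcal C}(b_{i*}-\rho_i)+\sum_{i\in\mathcal I}\rho_i\ge w(\mathcal C,c,\mathcal K^{\mathcal C})$, where $\mathcal K^{\mathcal C}$ is the set of bids of bidders in $\mathcal C$. A Walrasian equilibrium (WE) is a pair $(x^*,p)$, $x^*$ efficient, $p\in\mathbb R^J_{\ge0}$, such that the surpluses $s_i=b_{i*}-p\,a^{i*}$ satisfy $s_i\ge0$ for all $i$, $p\,a^k+s_{i(k)}\ge b_k$ for all bids $k$ (envy-freeness), and $p_j=0$ whenever $(\bm Ax^* )_j<c_j$; payments are $\rho_i=p\,a^{i*}$. A valid cut is a pair $(\alpha,\alpha_0)$ with $\alpha\in\mathbb R^K_{\ge0}$ such that $\alpha x\le\alpha_0$ for every feasible allocation $x$ and $\alpha x^*=\alpha_0$ (fully demanded at $x^*$). Adding it as an artificial item means appending $\alpha$ as a new row of $\bm A$ (bid $k$ contains $\alpha_k$ units of the new item) with supply $\alpha_0$; this leaves the set of feasible allocations unchanged. An Artificial Walrasian Equilibrium (AWE) is a WE of the CA augmented by finitely many valid cuts as artificial items. *)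

theory Defs
  imports Complex_Main
begin

text \<open>
Generic (possibly augmented) auction data.  A j k is the (real) number of units of item j in
bid k, cap j is the supply of item j.  Bids are 0..K-1, bidders 0..I-1,
bidder k is the bidder i(k) who made bid k, and b k is the amount of bid k.
An allocation x in {0,1}^K is represented by the set S of accepted bids.
\<close>

definition feasible ::
  "'j set \<Rightarrow> ('j \<Rightarrow> nat \<Rightarrow> real) \<Rightarrow> ('j \<Rightarrow> real) \<Rightarrow> (nat \<Rightarrow> nat) \<Rightarrow> nat \<Rightarrow> nat set \<Rightarrow> bool"
  where "feasible Js A cap bidder K S \<longleftrightarrow>
     S \<subseteq> {..<K} \<and> inj_on bidder S \<and> (\<forall>j\<in>Js. (\<Sum>k\<in>S. A j k) \<le> cap j)"

definition efficient ::
  "'j set \<Rightarrow> ('j \<Rightarrow> nat \<Rightarrow> real) \<Rightarrow> ('j \<Rightarrow> real) \<Rightarrow> (nat \<Rightarrow> nat) \<Rightarrow> (nat \<Rightarrow> real) \<Rightarrow> nat \<Rightarrow> nat set \<Rightarrow> bool"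
  where "efficient Js A cap bidder b K S \<longleftrightarrow>
     feasible Js A cap bidder K S \<and>
     (\<forall>T. feasible Js A cap bidder K T \<longrightarrow> (\<Sum>k\<in>T. b k) \<le> (\<Sum>k\<in>S. b k))"

text \<open>Amount b_{i*} of bidder i's accepted bid in S (0 if none).\<close>
definition bstar :: "(nat \<Rightarrow> nat) \<Rightarrow> (nat \<Rightarrow> real) \<Rightarrow> nat set \<Rightarrow> nat \<Rightarrow> real"
  where "bstar bidder b S i = (\<Sum>k\<in>{k\<in>S. bidder k = i}. b k)"

text \<open>Total price p a^{i*} of bidder i's accepted bundle in S (0 if none).\<close>
definition paid :: "'j set \<Rightarrow> ('j \<Rightarrow> nat \<Rightarrow> real) \<Rightarrow> ('j \<Rightarrow> real) \<Rightarrow> (nat \<Rightarrow> nat) \<Rightarrow> nat set \<Rightarrow> nat \<Rightarrow> real"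
  where "paid Js A p bidder S i = (\<Sum>k\<in>{k\<in>S. bidder k = i}. \<Sum>j\<in>Js. p j * A j k)"

definition walrasian_eq ::
  "'j set \<Rightarrow> ('j \<Rightarrow> nat \<Rightarrow> real) \<Rightarrow> ('j \<Rightarrow> real) \<Rightarrow> nat \<Rightarrow> (nat \<Rightarrow> nat) \<Rightarrow> (nat \<Rightarrow> real) \<Rightarrow> nat
    \<Rightarrow> nat set \<Rightarrow> ('j \<Rightarrow> real) \<Rightarrow> bool"
  where "walrasian_eq Js A cap I bidder b K S p \<longleftrightarrow>
     efficient Js A cap bidder b K S \<and>
     (\<forall>j\<in>Js. p j \<ge> 0) \<and>
     (let s = (\<lambda>i. bstar bidder b S i - paid Js A p bidder S i) in
        (\<forall>i<I. s i \<ge> 0) \<and>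
        (\<forall>k<K. (\<Sum>j\<in>Js. p j * A j k) + s (bidder k) \<ge> b k)) \<and>
     (\<forall>j\<in>Js. (\<Sum>k\<in>S. A j k) < cap j \<longrightarrow> p j = 0)"

text \<open>Original CA: items 0..J-1, bundles a k j \<in> \<nat>, supply c j.\<close>
definition origA :: "(nat \<Rightarrow> nat \<Rightarrow> nat) \<Rightarrow> nat \<Rightarrow> nat \<Rightarrow> real"
  where "origA a j k = real (a k j)"

definition origC :: "(nat \<Rightarrow> nat) \<Rightarrow> nat \<Rightarrow> real"
  where "origC c j = real (c j)"

definition coal_value ::
  "nat \<Rightarrow> (nat \<Rightarrow> nat) \<Rightarrow> (nat \<Rightarrow> nat \<Rightarrow> nat) \<Rightarrow> (nat \<Rightarrow> nat) \<Rightarrow> (nat \<Rightarrow> real) \<Rightarrow> nat \<Rightarrow> nat set \<Rightarrow> real"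
  where "coal_value J c a bidder b K C =
     Max {(\<Sum>k\<in>T. b k) | T. feasible {..<J} (origA a) (origC c) bidder K T \<and> bidder ` T \<subseteq> C}"

definition core_selecting ::
  "nat \<Rightarrow> (nat \<Rightarrow> nat) \<Rightarrow> (nat \<Rightarrow> nat \<Rightarrow> nat) \<Rightarrow> nat \<Rightarrow> (nat \<Rightarrow> nat) \<Rightarrow> (nat \<Rightarrow> real) \<Rightarrow> nat
    \<Rightarrow> nat set \<Rightarrow> (nat \<Rightarrow> real) \<Rightarrow> bool"
  where "core_selecting J c a I bidder b K S \<rho> \<longleftrightarrow>
     (\<forall>i<I. i \<notin> bidder ` S \<longrightarrow> \<rho> i = 0) \<and>
     (\<forall>i<I. \<rho> i \<le> bstar bidder b S i) \<and>
     (\<forall>C\<subseteq>{..<I}. (\<Sum>i\<in>C. bstar bidder b S i - \<rho> i) + (\<Sum>i<I. \<rho> i)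
                      \<ge> coal_value J c a bidder b K C)"

definition valid_cut ::
  "nat \<Rightarrow> (nat \<Rightarrow> nat) \<Rightarrow> (nat \<Rightarrow> nat \<Rightarrow> nat) \<Rightarrow> (nat \<Rightarrow> nat) \<Rightarrow> nat \<Rightarrow> nat set
    \<Rightarrow> (nat \<Rightarrow> real) \<Rightarrow> real \<Rightarrow> bool"
  where "valid_cut J c a bidder K S \<alpha> \<alpha>0 \<longleftrightarrow>
     (\<forall>k<K. \<alpha> k \<ge> 0) \<and>
     (\<forall>T. feasible {..<J} (origA a) (origC c) bidder K T \<longrightarrow> (\<Sum>k\<in>T. \<alpha> k) \<le> \<alpha>0) \<and>
     (\<Sum>k\<in>S. \<alpha> k) = \<alpha>0"

text \<open>Augmented CA: items Inl j (original, j < J) and Inr t (t-th cut).\<close>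
definition augItems :: "nat \<Rightarrow> ((nat \<Rightarrow> real) \<times> real) list \<Rightarrow> (nat + nat) set"
  where "augItems J cuts = Inl ` {..<J} \<union> Inr ` {..<length cuts}"

definition augA :: "(nat \<Rightarrow> nat \<Rightarrow> nat) \<Rightarrow> ((nat \<Rightarrow> real) \<times> real) list \<Rightarrow> nat + nat \<Rightarrow> nat \<Rightarrow> real"
  where "augA a cuts it k = (case it of Inl j \<Rightarrow> real (a k j) | Inr t \<Rightarrow> fst (cuts ! t) k)"

definition augC :: "(nat \<Rightarrow> nat) \<Rightarrow> ((nat \<Rightarrow> real) \<times> real) list \<Rightarrow> nat + nat \<Rightarrow> real"
  where "augC c cuts it = (case it of Inl j \<Rightarrow> real (c j) | Inr t \<Rightarrow> snd (cuts ! t))"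

end

theory Submission
  imports Defs
begin

text \<open>
A single artificial item suffices. Give bid k the cut coefficient
\<alpha>_k = max 0 (b_k - b_{i(k)*} + \<rho>_{i(k)}), i.e. its amount minus the core surplus
of its bidder. The core constraint for the coalition of bidders of a feasible
allocation T bounds \<Sum>_{k\<in>T} \<alpha>_k by \<Sum>_i \<rho>_i, with equality at x^*, so (\<alpha>, \<Sum>_i \<rho>_i)
is a valid cut. Pricing this artificial item at 1 and every original item at 0,
winner i pays \<rho>_i, and envy-freeness is exactly the inequality
\<alpha>_k \<ge> b_k - (b_{i(k)*} - \<rho>_{i(k)}) built into \<alpha>.
\<close>

lemma feasible_finite:
  "feasible Js A cap bidder K T \<Longrightarrow> finite T"
  unfolding feasible_def using finite_subset by blast

lemma feasible_subset:
  assumes "feasible Js A cap bidder K T" "T' \<subseteq> T" "\<forall>j\<in>Js. \<forall>k. 0 \<le> A j k"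
  shows "feasible Js A cap bidder K T'"
proof -
  have "(\<Sum>k\<in>T'. A j k) \<le> (\<Sum>k\<in>T. A j k)" if "j \<in> Js" for j
    using assms that feasible_finite by (intro sum_mono2) auto
  then show ?thesis
    using assms unfolding feasible_def by (meson inj_on_subset order_trans subset_trans)
qed

lemma feasible_orig_subset:
  "feasible {..<J} (origA a) (origC c) bidder K T \<Longrightarrow> T' \<subseteq> T
    \<Longrightarrow> feasible {..<J} (origA a) (origC c) bidder K T'"
  by (rule feasible_subset) (auto simp: origA_def)

lemma coal_value_ge:
  assumes "feasible {..<J} (origA a) (origC c) bidder K T" "bidder ` T \<subseteq> C"
  shows "sum b T \<le> coal_value J c a bidder b K C"
proof -
  let ?V = "{(\<Sum>k\<in>T. b k) | T. feasible {..<J} (origA a) (origC c) bidder K T \<and> bidder ` T \<subseteq> C}"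
  have "?V \<subseteq> sum b ` Pow {..<K}"
    unfolding feasible_def by auto
  then have "finite ?V"
    by (rule finite_subset) simp
  then show ?thesis
    unfolding coal_value_def using assms by (intro Max_ge) blast+
qed

lemma paid_eq_bstar:
  "paid Js A p bidder S i = bstar bidder (\<lambda>k. \<Sum>j\<in>Js. p j * A j k) S i"
  unfolding paid_def bstar_def ..

lemma bstar_winner:
  assumes "inj_on bidder S" "k \<in> S"
  shows "bstar bidder f S (bidder k) = f k"
proof -
  have "{k'\<in>S. bidder k' = bidder k} = {k}"
    using assms by (auto simp: inj_on_def)
  then show ?thesis
    by (simp add: bstar_def)
qed

lemma bstar_loser:
  "i \<notin> bidder ` S \<Longrightarrow> bstar bidder f S i = 0"
  unfolding bstar_def by (rule sum.neutral) auto

lemma sum_bstar: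
  assumes "finite S" "finite C"
  shows "(\<Sum>i\<in>C. bstar bidder f S i) = sum f {k\<in>S. bidder k \<in> C}"
proof -
  have "(\<Sum>i\<in>C. bstar bidder f S i) = (\<Sum>i\<in>C. sum f {k\<in>{k\<in>S. bidder k \<in> C}. bidder k = i})"
    unfolding bstar_def by (intro sum.cong refl) auto
  also have "\<dots> = sum f {k\<in>S. bidder k \<in> C}"
    using assms by (intro sum.group) auto
  finally show ?thesis .
qed

lemma core_selecting_coalition_bound:
  assumes "core_selecting J c a I bidder b K S \<rho>" "C \<subseteq> {..<I}"
    and "feasible {..<J} (origA a) (origC c) bidder K T" "bidder ` T \<subseteq> C"
  shows "sum b T \<le> (\<Sum>i\<in>C. bstar bidder b S i - \<rho> i) + (\<Sum>i<I. \<rho> i)"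
proof -
  have "coal_value J c a bidder b K C \<le> (\<Sum>i\<in>C. bstar bidder b S i - \<rho> i) + (\<Sum>i<I. \<rho> i)"
    using assms(1,2) unfolding core_selecting_def by blast
  with coal_value_ge[OF assms(3,4)] show ?thesis
    by (rule order_trans)
qed

lemma core_selecting_nonneg:
  assumes core: "core_selecting J c a I bidder b K S \<rho>"
    and FS: "feasible {..<J} (origA a) (origC c) bidder K S" and "i < I"
  shows "0 \<le> \<rho> i"
proof -
  define C where "C = {..<I} - {i}"
  define T where "T = {k\<in>S. bidder k \<in> C}"
  have FT: "feasible {..<J} (origA a) (origC c) bidder K T"
    using FS by (rule feasible_orig_subset) (auto simp: T_def)
  have "sum b T \<le> (\<Sum>i\<in>C. bstar bidder b S i - \<rho> i) + (\<Sum>i<I. \<rho> i)"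
    by (rule core_selecting_coalition_bound[OF core _ FT]) (auto simp: C_def T_def)
  moreover have "sum b T = (\<Sum>i\<in>C. bstar bidder b S i)"
    using feasible_finite[OF FS] by (simp add: sum_bstar C_def T_def)
  moreover have "(\<Sum>i<I. \<rho> i) = sum \<rho> C + \<rho> i"
    unfolding C_def using \<open>i < I\<close> by (simp add: sum_diff1)
  ultimately show ?thesis
    by (simp add: sum_subtractf)
qed

definition core_cut :: "(nat \<Rightarrow> nat) \<Rightarrow> (nat \<Rightarrow> real) \<Rightarrow> nat set \<Rightarrow> (nat \<Rightarrow> real) \<Rightarrow> nat \<Rightarrow> real"
  where "core_cut bidder b S \<rho> k = max 0 (b k - bstar bidder b S (bidder k) + \<rho> (bidder k))"

context
  fixes J I K :: nat and c :: "nat \<Rightarrow> nat" and a :: "nat \<Rightarrow> nat \<Rightarrow> nat"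
    and bidder :: "nat \<Rightarrow> nat" and b :: "nat \<Rightarrow> real" and S :: "nat set" and \<rho> :: "nat \<Rightarrow> real"
  assumes bidder_range: "\<forall>k<K. bidder k < I"
    and FS: "feasible {..<J} (origA a) (origC c) bidder K S"
    and core: "core_selecting J c a I bidder b K S \<rho>"
begin

lemma bstar_core_cut:
  assumes "i < I"
  shows "bstar bidder (core_cut bidder b S \<rho>) S i = \<rho> i"
proof (cases "i \<in> bidder ` S")
  case True
  then obtain k where k: "k \<in> S" "i = bidder k" by auto
  have inj: "inj_on bidder S"
    using FS unfolding feasible_def by simp
  from core_selecting_nonneg[OF core FS assms] show ?thesis
    using k by (simp add: bstar_winner[OF inj] core_cut_def)
next
  case False
  then show ?thesis
    using core assms by (simp add: bstar_loser core_selecting_def)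
qed

lemma sum_core_cut:
  "sum (core_cut bidder b S \<rho>) S = (\<Sum>i<I. \<rho> i)"
proof -
  have "{k\<in>S. bidder k \<in> {..<I}} = S"
    using FS bidder_range unfolding feasible_def by auto
  then have "sum (core_cut bidder b S \<rho>) S = (\<Sum>i<I. bstar bidder (core_cut bidder b S \<rho>) S i)"
    using sum_bstar[OF feasible_finite[OF FS] finite_lessThan] by simp
  also have "\<dots> = (\<Sum>i<I. \<rho> i)"
    by (simp add: bstar_core_cut)
  finally show ?thesis .
qed

text \<open>
Only bids with positive coefficient matter: they form a feasible allocation,
and the core constraint for the coalition of their bidders gives the bound.
\<close>

lemma valid_core_cut:
  "valid_cut J c a bidder K S (core_cut bidder b S \<rho>) (\<Sum>i<I. \<rho> i)"
  unfolding valid_cut_def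
proof (intro conjI allI impI)
  fix T assume FT: "feasible {..<J} (origA a) (origC c) bidder K T"
  define g where "g k = b k - bstar bidder b S (bidder k) + \<rho> (bidder k)" for k
  define T' where "T' = {k\<in>T. 0 < g k}"
  have FT': "feasible {..<J} (origA a) (origC c) bidder K T'"
    using FT by (rule feasible_orig_subset) (auto simp: T'_def)
  have inj: "inj_on bidder T'"
    using FT' unfolding feasible_def by simp
  have "sum (core_cut bidder b S \<rho>) T = sum g T'"
  proof -
    have "sum (core_cut bidder b S \<rho>) T = sum (core_cut bidder b S \<rho>) T'"
      using feasible_finite[OF FT]
      by (intro sum.mono_neutral_right) (auto simp: T'_def core_cut_def g_def)
    then show ?thesis
      by (simp add: T'_def core_cut_def g_def)
  qed
  also have "\<dots> = sum b T' - (\<Sum>i\<in>bidder ` T'. bstar bidder b S i - \<rho> i)"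
    by (simp add: g_def sum.reindex[OF inj] sum_subtractf sum.distrib)
  also have "\<dots> \<le> (\<Sum>i<I. \<rho> i)"
  proof -
    have "bidder ` T' \<subseteq> {..<I}"
      using FT' bidder_range unfolding feasible_def by auto
    from core_selecting_coalition_bound[OF core this FT' order_refl] show ?thesis
      by linarith
  qed
  finally show "sum (core_cut bidder b S \<rho>) T \<le> (\<Sum>i<I. \<rho> i)" .
next
  show "0 \<le> core_cut bidder b S \<rho> k" for k
    by (simp add: core_cut_def)
qed (rule sum_core_cut)

end

lemma feasible_augmented_iff:
  "feasible (augItems J cuts) (augA a cuts) (augC c cuts) bidder K T \<longleftrightarrow>
     feasible {..<J} (origA a) (origC c) bidder K T \<and> (\<forall>(\<alpha>, \<alpha>0)\<in>set cuts. sum \<alpha> T \<le> \<alpha>0)"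
  unfolding feasible_def augItems_def ball_Un
  by (auto simp: augA_def augC_def origA_def origC_def all_set_conv_all_nth split_beta)

lemma efficient_augmented_iff:
  assumes "\<forall>(\<alpha>, \<alpha>0)\<in>set cuts. valid_cut J c a bidder K S \<alpha> \<alpha>0"
  shows "efficient (augItems J cuts) (augA a cuts) (augC c cuts) bidder b K S \<longleftrightarrow>
           efficient {..<J} (origA a) (origC c) bidder b K S"
proof -
  have "feasible (augItems J cuts) (augA a cuts) (augC c cuts) bidder K T \<longleftrightarrow>
          feasible {..<J} (origA a) (origC c) bidder K T" for T
  proof -
    have "sum \<alpha> T \<le> \<alpha>0"
      if "(\<alpha>, \<alpha>0) \<in> set cuts" "feasible {..<J} (origA a) (origC c) bidder K T" for \<alpha> \<alpha>0
      using bspec[OF assms that(1)] that(2) unfolding valid_cut_def by simp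
    then show ?thesis
      unfolding feasible_augmented_iff by auto
  qed
  then show ?thesis
    unfolding efficient_def by simp
qed

definition cut_price :: "nat \<Rightarrow> nat + nat \<Rightarrow> real"
  where "cut_price t it = (if it = Inr t then 1 else 0)"

lemma bundle_price_cut_price:
  assumes "cuts ! t = (\<alpha>, \<alpha>0)" "t < length cuts"
  shows "(\<Sum>j\<in>augItems J cuts. cut_price t j * augA a cuts j k) = \<alpha> k"
proof -
  have "(\<Sum>j\<in>augItems J cuts. cut_price t j * augA a cuts j k)
          = (\<Sum>j\<in>augItems J cuts. if j = Inr t then augA a cuts j k else 0)"
    by (rule sum.cong) (auto simp: cut_price_def)
  also have "\<dots> = \<alpha> k"
    using assms by (simp add: augItems_def augA_def)
  finally show ?thesis .
qed

lemma paid_cut_price: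
  assumes "cuts ! t = (\<alpha>, \<alpha>0)" "t < length cuts"
  shows "paid (augItems J cuts) (augA a cuts) (cut_price t) bidder S i = bstar bidder \<alpha> S i"
  unfolding paid_eq_bstar bundle_price_cut_price[OF assms] ..

lemma walrasian_eq_cut_price:
  assumes valid: "\<forall>(\<alpha>, \<alpha>0)\<in>set cuts. valid_cut J c a bidder K S \<alpha> \<alpha>0"
    and cut: "cuts ! t = (\<alpha>, \<alpha>0)" "t < length cuts"
    and eff: "efficient {..<J} (origA a) (origC c) bidder b K S"
    and surplus: "\<forall>i<I. bstar bidder \<alpha> S i \<le> bstar bidder b S i"
    and envy_free: "\<forall>k<K. b k \<le> \<alpha> k + (bstar bidder b S (bidder k) - bstar bidder \<alpha> S (bidder k))"
  shows "walrasian_eq (augItems J cuts) (augA a cuts) (augC c cuts) I bidder b K S (cut_price t)"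
proof -
  have "valid_cut J c a bidder K S \<alpha> \<alpha>0"
    using bspec[OF valid nth_mem[OF cut(2)]] cut(1) by simp
  then have demanded: "(\<Sum>k\<in>S. augA a cuts (Inr t) k) = augC c cuts (Inr t)"
    using cut by (simp add: augA_def augC_def valid_cut_def)
  show ?thesis
    unfolding walrasian_eq_def Let_def paid_cut_price[OF cut] bundle_price_cut_price[OF cut]
  proof (intro conjI allI impI ballI)
    show "efficient (augItems J cuts) (augA a cuts) (augC c cuts) bidder b K S"
      using efficient_augmented_iff[OF valid] eff by simp
    show "0 \<le> cut_price t j" for j
      by (simp add: cut_price_def)
    show "0 \<le> bstar bidder b S i - bstar bidder \<alpha> S i" if "i < I" for i
      using surplus that by simp
    show "b k \<le> \<alpha> k + (bstar bidder b S (bidder k) - bstar bidder \<alpha> S (bidder k))" if "k < K" for k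
      using envy_free that by simp
    show "cut_price t j = 0" if "(\<Sum>k\<in>S. augA a cuts j k) < augC c cuts j" for j
      using that demanded by (auto simp: cut_price_def)
  qed
qed

theorem theorem1:
  fixes J I K :: nat
    and c :: "nat \<Rightarrow> nat"
    and a :: "nat \<Rightarrow> nat \<Rightarrow> nat"
    and bidder :: "nat \<Rightarrow> nat"
    and b :: "nat \<Rightarrow> real"
    and S :: "nat set"
    and \<rho> :: "nat \<Rightarrow> real"
  assumes supply_pos: "\<forall>j<J. c j \<ge> 1"
    and bundle_le: "\<forall>k<K. \<forall>j<J. a k j \<le> c j"
    and amount_nonneg: "\<forall>k<K. b k \<ge> 0"
    and bidder_range: "\<forall>k<K. bidder k < I"
    and eff: "efficient {..<J} (origA a) (origC c) bidder b K S"
    and core: "core_selecting J c a I bidder b K S \<rho>"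
  shows "\<exists>cuts :: ((nat \<Rightarrow> real) \<times> real) list.
           (\<forall>(\<alpha>, \<alpha>0) \<in> set cuts. valid_cut J c a bidder K S \<alpha> \<alpha>0) \<and>
           (\<exists>p :: nat + nat \<Rightarrow> real.
              walrasian_eq (augItems J cuts) (augA a cuts) (augC c cuts) I bidder b K S p \<and>
              (\<forall>i \<in> bidder ` S. paid (augItems J cuts) (augA a cuts) p bidder S i = \<rho> i))"
proof -
  define \<alpha> where "\<alpha> = core_cut bidder b S \<rho>"
  define cuts where "cuts = [(\<alpha>, \<Sum>i<I. \<rho> i)]"
  have FS: "feasible {..<J} (origA a) (origC c) bidder K S"
    using eff unfolding efficient_def by simp
  have winners: "bidder ` S \<subseteq> {..<I}"
    using FS bidder_range unfolding feasible_def by auto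
  have valid: "\<forall>(\<alpha>', \<alpha>0)\<in>set cuts. valid_cut J c a bidder K S \<alpha>' \<alpha>0"
    using valid_core_cut[OF bidder_range FS core] by (simp add: cuts_def \<alpha>_def)
  have bstar_\<alpha>: "\<And>i. i < I \<Longrightarrow> bstar bidder \<alpha> S i = \<rho> i"
    unfolding \<alpha>_def using bstar_core_cut[OF bidder_range FS core] .
  have "walrasian_eq (augItems J cuts) (augA a cuts) (augC c cuts) I bidder b K S (cut_price 0)"
  proof (rule walrasian_eq_cut_price[OF valid _ _ eff])
    show "\<forall>i<I. bstar bidder \<alpha> S i \<le> bstar bidder b S i"
      using core by (simp add: bstar_\<alpha> core_selecting_def)
    have "b k - (bstar bidder b S (bidder k) - \<rho> (bidder k)) \<le> \<alpha> k" for k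
      by (simp add: \<alpha>_def core_cut_def)
    then show "\<forall>k<K. b k \<le> \<alpha> k + (bstar bidder b S (bidder k) - bstar bidder \<alpha> S (bidder k))"
      using bidder_range by (simp add: bstar_\<alpha> algebra_simps)
  qed (simp_all add: cuts_def)
  moreover have "paid (augItems J cuts) (augA a cuts) (cut_price 0) bidder S i = \<rho> i"
    if "i \<in> bidder ` S" for i
    using paid_cut_price[of cuts 0 \<alpha>] that winners bstar_\<alpha> by (auto simp: cuts_def)
  ultimately show ?thesis
    using valid by blast
qed

end
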